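(* Let $T$ be a frequently hypercyclic operator on a Banach space $X$. If $T$ admits a frequently hypercyclic subspace, then there exists a product $\times$ on $X$ such that $(X,\times)$ is a commutative Banach algebra and the set $FHC(T)$ of frequently hypercyclic vectors for $T$ is strongly algebrable with respect to $\times$.
   Context: A vector $x$ is frequently hypercyclic for $T$ if for every non-empty open $U\subset X$ the set $\{n\in\mathbb N_0:T^nx\in U\}$ has positive lower density $\liminf_{N\to\infty}\frac{\mathrm{card}(A\cap[0,N])}{N+1}$. A frequently hypercyclic subspace for $T$ is a closed infinite-dimensional subspace all of whose non-zero elements are frequently hypercyclic for $T$. A Banach algebra is an associative complex algebra that is a Banach space with $\|xy\|\le\|x\|\|y\|$. For a commutative algebra, $FHC(T)$ is strongly algebrable if there is an algebraically independent sequence $(x_n)_n$ such that every non-zero element of the algebra generated by $(x_n)_n$ lies in $FHC(T)$ (equivalently, $FHC(T)$ contains, except zero, an infinitely generated algebra isomorphic to a free algebra). *)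

theory Defs
  imports "HOL-Analysis.Analysis" "HOL-Library.Liminf_Limsup"
begin

text \<open>A complex Banach space: a real Banach space of type 'a together with a complex
  scalar multiplication extending the real one and compatible with the norm.\<close>
definition complex_banach :: "(complex \<Rightarrow> 'a::banach \<Rightarrow> 'a) \<Rightarrow> bool" where
  "complex_banach sc \<longleftrightarrow> vector_space sc
     \<and> (\<forall>r x. sc (complex_of_real r) x = scaleR r x)
     \<and> (\<forall>c x. norm (sc c x) = cmod c * norm x)"

definition bounded_clinear_op :: "(complex \<Rightarrow> 'a::banach \<Rightarrow> 'a) \<Rightarrow> ('a \<Rightarrow> 'a) \<Rightarrow> bool" where
  "bounded_clinear_op sc T \<longleftrightarrow> bounded_linear T \<and> (\<forall>c x. T (sc c x) = sc c (T x))"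

definition lower_density :: "nat set \<Rightarrow> ereal" where
  "lower_density A = liminf (\<lambda>N. ereal (real (card (A \<inter> {0..N})) / real (N + 1)))"

definition freq_hypercyclic :: "('a::topological_space \<Rightarrow> 'a) \<Rightarrow> 'a \<Rightarrow> bool" where
  "freq_hypercyclic T x \<longleftrightarrow>
     (\<forall>U. open U \<and> U \<noteq> {} \<longrightarrow> lower_density {n. (T ^^ n) x \<in> U} > 0)"

definition FHC :: "('a::topological_space \<Rightarrow> 'a) \<Rightarrow> 'a set" where
  "FHC T = {x. freq_hypercyclic T x}"

text \<open>Frequently hypercyclic subspace: closed, infinite-dimensional (over \<complex>) subspace
  all of whose non-zero elements are frequently hypercyclic.\<close>
definition fhc_subspace :: "(complex \<Rightarrow> 'a::banach \<Rightarrow> 'a) \<Rightarrow> ('a \<Rightarrow> 'a) \<Rightarrow> 'a set \<Rightarrow> bool" where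
  "fhc_subspace sc T M \<longleftrightarrow> module.subspace sc M \<and> closed M
     \<and> (\<forall>F. finite F \<longrightarrow> \<not> M \<subseteq> module.span sc F)
     \<and> (\<forall>x\<in>M. x \<noteq> 0 \<longrightarrow> x \<in> FHC T)"

definition comm_banach_algebra_product ::
  "(complex \<Rightarrow> 'a::banach \<Rightarrow> 'a) \<Rightarrow> ('a \<Rightarrow> 'a \<Rightarrow> 'a) \<Rightarrow> bool" where
  "comm_banach_algebra_product sc m \<longleftrightarrow>
     (\<forall>x y z. m (x + y) z = m x z + m y z)
   \<and> (\<forall>x y z. m x (y + z) = m x y + m x z)
   \<and> (\<forall>c x y. m (sc c x) y = sc c (m x y))
   \<and> (\<forall>c x y. m x (sc c y) = sc c (m x y))
   \<and> (\<forall>x y z. m (m x y) z = m x (m y z))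
   \<and> (\<forall>x y. m x y = m y x)
   \<and> (\<forall>x y. norm (m x y) \<le> norm x * norm y)"

text \<open>Powers a^(k+1) in a (possibly non-unital) algebra.\<close>
fun apow :: "('a \<Rightarrow> 'a \<Rightarrow> 'a) \<Rightarrow> 'a \<Rightarrow> nat \<Rightarrow> 'a" where
  "apow m a 0 = a"
| "apow m a (Suc k) = m a (apow m a k)"

fun mprod :: "('a \<Rightarrow> 'a \<Rightarrow> 'a) \<Rightarrow> 'a::zero list \<Rightarrow> 'a" where
  "mprod m [] = 0"
| "mprod m [a] = a"
| "mprod m (a # b # as) = m a (mprod m (b # as))"

text \<open>Monomial x^\<alpha> = \<Prod>_{i, \<alpha> i \<noteq> 0} (x i)^(\<alpha> i), for a nonzero finitely supported \<alpha>.\<close>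
definition monomial_eval :: "('a \<Rightarrow> 'a \<Rightarrow> 'a) \<Rightarrow> (nat \<Rightarrow> 'a::zero) \<Rightarrow> (nat \<Rightarrow> nat) \<Rightarrow> 'a" where
  "monomial_eval m x \<alpha> =
     mprod m (map (\<lambda>i. apow m (x i) (\<alpha> i - 1)) (sorted_list_of_set {i. \<alpha> i \<noteq> 0}))"

text \<open>Algebraic independence: no nonzero polynomial without constant term vanishes at x.\<close>
definition alg_independent ::
  "(complex \<Rightarrow> 'a::banach \<Rightarrow> 'a) \<Rightarrow> ('a \<Rightarrow> 'a \<Rightarrow> 'a) \<Rightarrow> (nat \<Rightarrow> 'a) \<Rightarrow> bool" where
  "alg_independent sc m x \<longleftrightarrow>
     (\<forall>S c. finite S \<longrightarrow> (\<forall>\<alpha>\<in>S. \<alpha> \<noteq> (\<lambda>_. 0) \<and> finite {i. \<alpha> i \<noteq> 0}) \<longrightarrow>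
        (\<Sum>\<alpha>\<in>S. sc (c \<alpha>) (monomial_eval m x \<alpha>)) = 0 \<longrightarrow> (\<forall>\<alpha>\<in>S. c \<alpha> = 0))"

inductive_set gen_algebra ::
  "(complex \<Rightarrow> 'a::banach \<Rightarrow> 'a) \<Rightarrow> ('a \<Rightarrow> 'a \<Rightarrow> 'a) \<Rightarrow> (nat \<Rightarrow> 'a) \<Rightarrow> 'a set"
  for sc m x where
  gen: "x n \<in> gen_algebra sc m x"
| add: "a \<in> gen_algebra sc m x \<Longrightarrow> b \<in> gen_algebra sc m x \<Longrightarrow> a + b \<in> gen_algebra sc m x"
| smult: "a \<in> gen_algebra sc m x \<Longrightarrow> sc c a \<in> gen_algebra sc m x"
| mult: "a \<in> gen_algebra sc m x \<Longrightarrow> b \<in> gen_algebra sc m x \<Longrightarrow> m a b \<in> gen_algebra sc m x"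

definition strongly_algebrable ::
  "(complex \<Rightarrow> 'a::banach \<Rightarrow> 'a) \<Rightarrow> ('a \<Rightarrow> 'a \<Rightarrow> 'a) \<Rightarrow> 'a set \<Rightarrow> bool" where
  "strongly_algebrable sc m A \<longleftrightarrow>
     (\<exists>x. alg_independent sc m x \<and> (\<forall>y\<in>gen_algebra sc m x. y \<noteq> 0 \<longrightarrow> y \<in> A))"

end

theory Submission
  imports Defs "HOL-Computational_Algebra.Polynomial"
begin

text \<open>
  Only the frequently hypercyclic subspace \<open>M\<close> matters.
  By Hahn--Banach, \<open>M\<close> carries a biorthogonal sequence: \<open>u\<^sub>n \<in> M\<close> and continuous functionals
  \<open>g\<^sub>n\<close> on \<open>X\<close> with \<open>g\<^sub>i(u\<^sub>j) = \<delta>\<^sub>i\<^sub>j\<close>. For positive weights \<open>w\<^sub>n\<close> decaying fast enough,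
  \<open>x \<star> y = \<Sum> w\<^sub>n g\<^sub>n(x) g\<^sub>n(y) u\<^sub>n\<close> is a commutative Banach algebra product with values in \<open>M\<close>,
  and every \<open>\<chi>\<^sub>n = w\<^sub>n g\<^sub>n\<close> is multiplicative. Choosing generators \<open>x\<^sub>i \<in> M\<close> with
  \<open>\<chi>\<^sub>k(x\<^sub>i) = t\<^sub>k ^ (D\<^sub>k + 1) ^ i\<close>, where the \<open>t\<^sub>k\<close> are distinct and every \<open>D\<close> equals \<open>D\<^sub>k\<close> for
  infinitely many \<open>k\<close>, a polynomial relation among the \<open>x\<^sub>i\<close> becomes (Kronecker substitution)
  a univariate polynomial with infinitely many roots, so the \<open>x\<^sub>i\<close> are algebraically
  independent. The algebra they generate lies in the closed subspace \<open>M\<close>, so its non-zero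
  elements are frequently hypercyclic.
\<close>

section \<open>The Hahn--Banach theorem\<close>

text \<open>Graph of a real-linear functional on a subspace through \<open>u\<close>, dominated by the norm and
  equal to \<open>\<parallel>u\<parallel>\<close> at \<open>u\<close>; Zorn's lemma is applied to these graphs.\<close>
definition norming_graph :: "'a::real_normed_vector \<Rightarrow> ('a \<times> real) set \<Rightarrow> bool" where
  "norming_graph u G \<longleftrightarrow> range (\<lambda>t. (t *\<^sub>R u, t * norm u)) \<subseteq> G
     \<and> (\<forall>x a b. (x, a) \<in> G \<longrightarrow> (x, b) \<in> G \<longrightarrow> a = b)
     \<and> (\<forall>x a y b. (x, a) \<in> G \<longrightarrow> (y, b) \<in> G \<longrightarrow> (x + y, a + b) \<in> G)
     \<and> (\<forall>x a r. (x, a) \<in> G \<longrightarrow> (r *\<^sub>R x, r * a) \<in> G)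
     \<and> (\<forall>x a. (x, a) \<in> G \<longrightarrow> a \<le> norm x)"

lemma norming_graphI:
  assumes "\<And>t. (t *\<^sub>R u, t * norm u) \<in> G"
    and "\<And>x a b. (x, a) \<in> G \<Longrightarrow> (x, b) \<in> G \<Longrightarrow> a = b"
    and "\<And>x a y b. (x, a) \<in> G \<Longrightarrow> (y, b) \<in> G \<Longrightarrow> (x + y, a + b) \<in> G"
    and "\<And>x a r. (x, a) \<in> G \<Longrightarrow> (r *\<^sub>R x, r * a) \<in> G"
    and "\<And>x a. (x, a) \<in> G \<Longrightarrow> a \<le> norm x"
  shows "norming_graph u G"
  using assms unfolding norming_graph_def by blast

lemma norming_graphD:
  assumes "norming_graph u G"
  shows norming_graph_line_subset: "(t *\<^sub>R u, t * norm u) \<in> G"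
    and norming_graph_unique: "(x, a) \<in> G \<Longrightarrow> (x, b) \<in> G \<Longrightarrow> a = b"
    and norming_graph_add: "(x, a) \<in> G \<Longrightarrow> (y, b) \<in> G \<Longrightarrow> (x + y, a + b) \<in> G"
    and norming_graph_scale: "(x, a) \<in> G \<Longrightarrow> (r *\<^sub>R x, r * a) \<in> G"
    and norming_graph_le_norm: "(x, a) \<in> G \<Longrightarrow> a \<le> norm x"
  using assms unfolding norming_graph_def by blast+

lemma norming_graph_line:
  assumes "u \<noteq> 0"
  shows "norming_graph u (range (\<lambda>t. (t *\<^sub>R u, t * norm u)))" (is "norming_graph u ?L")
proof (rule norming_graphI)
  fix x a b assume "(x, a) \<in> ?L" "(x, b) \<in> ?L"
  then obtain s t where "x = s *\<^sub>R u" "a = s * norm u" "x = t *\<^sub>R u" "b = t * norm u"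
    by blast
  with assms show "a = b" by simp
next
  fix x a y b assume "(x, a) \<in> ?L" "(y, b) \<in> ?L"
  then obtain s t where "x = s *\<^sub>R u" "a = s * norm u" "y = t *\<^sub>R u" "b = t * norm u"
    by blast
  then have "(x + y, a + b) = ((s + t) *\<^sub>R u, (s + t) * norm u)"
    by (simp add: algebra_simps)
  then show "(x + y, a + b) \<in> ?L" by blast
next
  fix x a r assume "(x, a) \<in> ?L"
  then obtain s where "x = s *\<^sub>R u" "a = s * norm u" by blast
  then have "(r *\<^sub>R x, r * a) = ((r * s) *\<^sub>R u, (r * s) * norm u)" by simp
  then show "(r *\<^sub>R x, r * a) \<in> ?L" by blast
next
  fix x a assume "(x, a) \<in> ?L"
  then obtain s where "x = s *\<^sub>R u" "a = s * norm u" by blast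
  then show "a \<le> norm x" by (simp add: mult_right_mono)
qed blast

lemma norming_graph_chain_Union:
  assumes "C \<noteq> {}" "chain\<^sub>\<subseteq> C" "\<And>G. G \<in> C \<Longrightarrow> norming_graph u G"
  shows "norming_graph u (\<Union>C)"
proof -
  have common: "\<exists>G\<in>C. p \<in> G \<and> q \<in> G" if pq: "p \<in> \<Union>C" "q \<in> \<Union>C" for p q
  proof -
    obtain G1 G2 where "G1 \<in> C" "G2 \<in> C" "p \<in> G1" "q \<in> G2" using pq by blast
    moreover have "G1 \<subseteq> G2 \<or> G2 \<subseteq> G1"
      using \<open>chain\<^sub>\<subseteq> C\<close> \<open>G1 \<in> C\<close> \<open>G2 \<in> C\<close> unfolding chain_subset_def by blast
    ultimately show ?thesis by blast
  qed
  obtain G0 where "G0 \<in> C" using \<open>C \<noteq> {}\<close> by blast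
  show ?thesis
  proof (rule norming_graphI)
    show "(t *\<^sub>R u, t * norm u) \<in> \<Union>C" for t
      using norming_graph_line_subset[OF assms(3)[OF \<open>G0 \<in> C\<close>]] \<open>G0 \<in> C\<close> by blast
  next
    fix x a b assume "(x, a) \<in> \<Union>C" "(x, b) \<in> \<Union>C"
    then obtain G where "G \<in> C" "(x, a) \<in> G" "(x, b) \<in> G" using common by blast
    then show "a = b" using norming_graph_unique assms(3) by blast
  next
    fix x a y b assume "(x, a) \<in> \<Union>C" "(y, b) \<in> \<Union>C"
    then obtain G where "G \<in> C" "(x, a) \<in> G" "(y, b) \<in> G" using common by blast
    then show "(x + y, a + b) \<in> \<Union>C" using norming_graph_add assms(3) by blast
  next
    fix x a r assume "(x, a) \<in> \<Union>C"
    then obtain G where "G \<in> C" "(x, a) \<in> G" by blast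
    then show "(r *\<^sub>R x, r * a) \<in> \<Union>C" using norming_graph_scale assms(3) by blast
  next
    fix x a assume "(x, a) \<in> \<Union>C"
    then obtain G where "G \<in> C" "(x, a) \<in> G" by blast
    then show "a \<le> norm x" using norming_graph_le_norm assms(3) by blast
  qed
qed

lemma norming_graph_separating_value:
  assumes G: "norming_graph u G"
  obtains c where "\<And>y a. (y, a) \<in> G \<Longrightarrow> a - norm (y - x) \<le> c"
    and "\<And>z b. (z, b) \<in> G \<Longrightarrow> c \<le> norm (z + x) - b"
proof -
  define L where "L = {a - norm (y - x) | y a. (y, a) \<in> G}"
  have below: "l \<le> norm (z + x) - b" if "l \<in> L" "(z, b) \<in> G" for l z b
  proof -
    obtain y a where ya: "(y, a) \<in> G" "l = a - norm (y - x)"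
      using \<open>l \<in> L\<close> L_def by blast
    have "a + b \<le> norm (y + z)"
      using norming_graph_le_norm[OF G norming_graph_add[OF G ya(1) that(2)]] .
    also have "\<dots> \<le> norm (y - x) + norm (z + x)"
      using norm_triangle_ineq[of "y - x" "z + x"] by simp
    finally show ?thesis using ya(2) by simp
  qed
  have "(0, 0) \<in> G"
    using norming_graph_line_subset[OF G, of 0] by simp
  then have "L \<noteq> {}" "bdd_above L"
    using below unfolding L_def bdd_above_def by blast+
  then show ?thesis
  proof (intro that[of "Sup L"])
    show "a - norm (y - x) \<le> Sup L" if "(y, a) \<in> G" for y a
      using that \<open>bdd_above L\<close> by (intro cSup_upper) (auto simp: L_def)
    show "Sup L \<le> norm (z + x) - b" if "(z, b) \<in> G" for z b
      using that \<open>L \<noteq> {}\<close> below by (intro cSup_least) auto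
  qed
qed

lemma norming_graph_adjoin_bound:
  assumes G: "norming_graph u G" and ya: "(y, a) \<in> G"
    and c_low: "\<And>y a. (y, a) \<in> G \<Longrightarrow> a - norm (y - x) \<le> c"
    and c_up: "\<And>z b. (z, b) \<in> G \<Longrightarrow> c \<le> norm (z + x) - b"
  shows "a + t * c \<le> norm (y + t *\<^sub>R x)"
proof -
  have scaled: "((1 / s) *\<^sub>R y, (1 / s) * a) \<in> G" for s
    using norming_graph_scale[OF G ya] .
  consider "t = 0" | "t > 0" | "t < 0" by linarith
  then show ?thesis
  proof cases
    case 1
    then show ?thesis using norming_graph_le_norm[OF G ya] by simp
  next
    case 2
    have "t * c \<le> t * (norm ((1 / t) *\<^sub>R y + x) - (1 / t) * a)"
      using c_up[OF scaled] 2 by (simp add: mult_left_mono)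
    also have "\<dots> = norm (t *\<^sub>R ((1 / t) *\<^sub>R y + x)) - a"
      using 2 by (simp add: right_diff_distrib)
    finally show ?thesis using 2 by (simp add: scaleR_add_right)
  next
    case 3
    have "(- t) * ((1 / - t) * a - norm ((1 / - t) *\<^sub>R y - x)) \<le> (- t) * c"
      using c_low[OF scaled, of "- t"] 3 by (intro mult_left_mono) auto
    also have "(- t) * ((1 / - t) * a - norm ((1 / - t) *\<^sub>R y - x))
        = a - norm ((- t) *\<^sub>R ((1 / - t) *\<^sub>R y - x))"
      using 3 by (simp add: right_diff_distrib)
    finally show ?thesis using 3 by (simp add: scaleR_diff_right)
  qed
qed

lemma norming_graph_decomposition_unique:
  assumes G: "norming_graph u G" and x: "x \<notin> fst ` G"
    and "(y1, a1) \<in> G" "(y2, a2) \<in> G" and eq: "y1 + t1 *\<^sub>R x = y2 + t2 *\<^sub>R x"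
  shows "t1 = t2 \<and> y1 = y2"
proof (cases "t1 = t2")
  case False
  have "(y2 - y1, a2 - a1) \<in> G"
    using norming_graph_add[OF G assms(4) norming_graph_scale[OF G assms(3), of "-1"]] by simp
  then have "((1 / (t1 - t2)) *\<^sub>R (y2 - y1), (1 / (t1 - t2)) * (a2 - a1)) \<in> G"
    by (rule norming_graph_scale[OF G])
  moreover have "(t1 - t2) *\<^sub>R x = y2 - y1"
    using eq by (simp add: algebra_simps)
  then have "(1 / (t1 - t2)) *\<^sub>R (y2 - y1) = (1 / (t1 - t2)) *\<^sub>R ((t1 - t2) *\<^sub>R x)"
    by simp
  also have "\<dots> = x"
    using False by simp
  ultimately show ?thesis using x by force
qed (use eq in simp)

lemma norming_graph_extend:
  assumes G: "norming_graph u G" and x: "x \<notin> fst ` G"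
  obtains G' where "norming_graph u G'" "G \<subset> G'"
proof -
  obtain c where c_low: "\<And>y a. (y, a) \<in> G \<Longrightarrow> a - norm (y - x) \<le> c"
    and c_up: "\<And>z b. (z, b) \<in> G \<Longrightarrow> c \<le> norm (z + x) - b"
    using norming_graph_separating_value[OF G] by blast
  define G' where "G' = {(y + t *\<^sub>R x, a + t * c) | y a t. (y, a) \<in> G}"
  have in_G': "(y + t *\<^sub>R x, a + t * c) \<in> G'" if "(y, a) \<in> G" for y a t
    unfolding G'_def using that by blast
  have "G \<subseteq> G'"
    using in_G'[where t = 0] by auto
  moreover have "(x, c) \<in> G' - G"
    using in_G'[OF norming_graph_line_subset[OF G, of 0], of 1] x by force
  moreover have "norming_graph u G'"
  proof (rule norming_graphI)
    show "(t *\<^sub>R u, t * norm u) \<in> G'" for t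
      using norming_graph_line_subset[OF G] \<open>G \<subseteq> G'\<close> by blast
  next
    fix z a b assume "(z, a) \<in> G'" "(z, b) \<in> G'"
    then obtain y1 a1 t1 y2 a2 t2 where h: "(y1, a1) \<in> G" "(y2, a2) \<in> G"
      "z = y1 + t1 *\<^sub>R x" "a = a1 + t1 * c" "z = y2 + t2 *\<^sub>R x" "b = a2 + t2 * c"
      unfolding G'_def by blast
    have "t1 = t2 \<and> y1 = y2"
      using h(3,5) by (intro norming_graph_decomposition_unique[OF G x h(1,2)]) simp
    then show "a = b" using h norming_graph_unique[OF G] by simp
  next
    fix z a y b assume "(z, a) \<in> G'" "(y, b) \<in> G'"
    then obtain y1 a1 t1 y2 a2 t2 where h: "(y1, a1) \<in> G" "(y2, a2) \<in> G"
      "z = y1 + t1 *\<^sub>R x" "a = a1 + t1 * c" "y = y2 + t2 *\<^sub>R x" "b = a2 + t2 * c"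
      unfolding G'_def by blast
    have "(z + y, a + b) = ((y1 + y2) + (t1 + t2) *\<^sub>R x, (a1 + a2) + (t1 + t2) * c)"
      using h by (simp add: algebra_simps)
    then show "(z + y, a + b) \<in> G'"
      using in_G'[OF norming_graph_add[OF G h(1,2)]] by simp
  next
    fix z a r assume "(z, a) \<in> G'"
    then obtain y1 a1 t1 where h: "(y1, a1) \<in> G" "z = y1 + t1 *\<^sub>R x" "a = a1 + t1 * c"
      unfolding G'_def by blast
    have "(r *\<^sub>R z, r * a) = (r *\<^sub>R y1 + (r * t1) *\<^sub>R x, r * a1 + (r * t1) * c)"
      using h by (simp add: algebra_simps)
    then show "(r *\<^sub>R z, r * a) \<in> G'"
      using in_G'[OF norming_graph_scale[OF G h(1)]] by simp
  next
    fix z a assume "(z, a) \<in> G'"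
    then show "a \<le> norm z"
      unfolding G'_def using norming_graph_adjoin_bound[OF G _ c_low c_up] by blast
  qed
  ultimately show ?thesis using that by blast
qed

lemma total_norming_graph_exists:
  assumes "u \<noteq> 0"
  obtains G where "norming_graph u G" "\<And>x. x \<in> fst ` G"
proof -
  have "\<forall>C\<in>chains {G. norming_graph u G}. \<exists>U\<in>{G. norming_graph u G}. \<forall>X\<in>C. X \<subseteq> U"
  proof
    fix C assume C: "C \<in> chains {G. norming_graph u G}"
    show "\<exists>U\<in>{G. norming_graph u G}. \<forall>X\<in>C. X \<subseteq> U"
    proof (cases "C = {}")
      case True
      then show ?thesis using norming_graph_line[OF assms] by blast
    next
      case False
      then show ?thesis using C norming_graph_chain_Union[OF False] unfolding chains_def by blast
    qed
  qed
  then have "\<exists>G\<in>{G. norming_graph u G}. \<forall>X\<in>{G. norming_graph u G}. G \<subseteq> X \<longrightarrow> X = G"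
    by (rule Zorn_Lemma2)
  then obtain G where G: "norming_graph u G"
    and maximal: "\<And>G'. norming_graph u G' \<Longrightarrow> G \<subseteq> G' \<Longrightarrow> G' = G"
    by blast
  have "x \<in> fst ` G" for x
  proof (rule ccontr)
    assume "x \<notin> fst ` G"
    then obtain G' where "norming_graph u G'" "G \<subset> G'"
      by (rule norming_graph_extend[OF G])
    then show False using maximal by blast
  qed
  then show ?thesis using that G by blast
qed

theorem real_hahn_banach_norming:
  fixes u :: "'a::real_normed_vector"
  assumes "u \<noteq> 0"
  obtains f where "bounded_linear f" "\<And>x. \<bar>f x\<bar> \<le> norm x" "f u = norm u"
proof -
  obtain G where G: "norming_graph u G" and total: "\<And>x. x \<in> fst ` G"
    using total_norming_graph_exists[OF assms] by blast
  define f where "f x = (THE a. (x, a) \<in> G)" for x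
  have f_graph: "(x, f x) \<in> G" for x
  proof -
    obtain a where a: "(x, a) \<in> G"
      using total[of x] by auto
    have "f x = a"
      unfolding f_def by (rule the_equality[where P = "\<lambda>a. (x, a) \<in> G", OF a])
        (rule norming_graph_unique[OF G _ a])
    then show ?thesis using a by simp
  qed
  have f_eq: "f x = a" if "(x, a) \<in> G" for x a
    using norming_graph_unique[OF G f_graph that] .
  have f_add: "f (x + y) = f x + f y" for x y
    using f_eq[OF norming_graph_add[OF G f_graph f_graph]] .
  have f_scale: "f (r *\<^sub>R x) = r * f x" for r x
    using f_eq[OF norming_graph_scale[OF G f_graph]] .
  have f_bound: "\<bar>f x\<bar> \<le> norm x" for x
    using norming_graph_le_norm[OF G f_graph, of x] norming_graph_le_norm[OF G f_graph, of "-x"]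
      f_scale[of "-1" x] by simp
  show ?thesis
  proof (rule that)
    show "bounded_linear f"
      by (rule bounded_linear_intro[of _ 1]) (auto simp: f_add f_scale f_bound)
    show "f u = norm u"
      using f_eq[OF norming_graph_line_subset[OF G, of 1]] by simp
  qed (rule f_bound)
qed

section \<open>Biorthogonal sequences in complex Banach spaces\<close>

locale complex_banach_space =
  fixes sc :: "complex \<Rightarrow> 'a::banach \<Rightarrow> 'a"
  assumes complex_banach: "complex_banach sc"
begin

sublocale C: vector_space sc
  using complex_banach unfolding complex_banach_def by blast

lemma sc_of_real: "sc (of_real r) x = r *\<^sub>R x"
  using complex_banach unfolding complex_banach_def by blast

lemma norm_sc: "norm (sc c x) = cmod c * norm x"
  using complex_banach unfolding complex_banach_def by blast

lemma sc_scaleR: "sc c (r *\<^sub>R x) = r *\<^sub>R sc c x"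
  by (metis C.scale_scale mult.commute sc_of_real)

lemma bounded_linear_sc: "bounded_linear (sc c)"
  by (rule bounded_linear_intro[of _ "cmod c"])
    (simp_all add: C.scale_right_distrib sc_scaleR norm_sc mult.commute)

definition clinear_functional :: "('a \<Rightarrow> complex) \<Rightarrow> bool" where
  "clinear_functional h \<longleftrightarrow> bounded_linear h \<and> (\<forall>c x. h (sc c x) = c * h x)"

lemma clinear_functionalD:
  assumes "clinear_functional h"
  shows clinear_functional_bounded_linear: "bounded_linear h"
    and clinear_functional_sc: "h (sc c x) = c * h x"
  using assms unfolding clinear_functional_def by blast+

lemma clinear_functional_complexification:
  fixes f :: "'a \<Rightarrow> real"
  assumes f: "bounded_linear f"
  shows "clinear_functional (\<lambda>x. of_real (f x) - \<i> * of_real (f (sc \<i> x)))"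
    (is "clinear_functional ?h")
proof -
  have "bounded_linear ?h"
    by (intro bounded_linear_sub bounded_linear_compose[OF bounded_linear_of_real]
        bounded_linear_compose[OF bounded_linear_mult_right] bounded_linear_compose[OF f]
        f bounded_linear_sc)
  moreover have "?h (sc c x) = c * ?h x" for c x
  proof -
    interpret f: bounded_linear f by (rule f)
    have c: "c = of_real (Re c) + \<i> * of_real (Im c)"
      by (simp add: complex_eq_iff)
    have ii: "sc \<i> (sc \<i> x) = - x"
      using sc_of_real[of "-1" x] by (simp add: C.scale_scale)
    have sc_c: "sc c x = Re c *\<^sub>R x + Im c *\<^sub>R sc \<i> x"
      by (subst c) (simp add: C.scale_left_distrib sc_of_real C.scale_scale[symmetric] sc_scaleR)
    have "sc \<i> (sc c x) = Re c *\<^sub>R sc \<i> x - Im c *\<^sub>R x"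
      by (subst c) (simp add: C.scale_left_distrib C.scale_right_distrib sc_of_real
          C.scale_scale[symmetric] sc_scaleR ii)
    then have "f (sc \<i> (sc c x)) = Re c * f (sc \<i> x) - Im c * f x"
      by (simp add: f.diff f.scale)
    moreover have "f (sc c x) = Re c * f x + Im c * f (sc \<i> x)"
      unfolding sc_c by (simp add: f.add f.scale)
    ultimately show ?thesis
      by (simp add: complex_eq_iff)
  qed
  ultimately show ?thesis unfolding clinear_functional_def by blast
qed

theorem complex_hahn_banach_nonvanishing:
  fixes u :: 'a
  assumes "u \<noteq> 0"
  obtains h where "clinear_functional h" "h u \<noteq> 0"
proof -
  obtain f where f: "bounded_linear f" and "f u = norm u"
    using real_hahn_banach_norming[OF assms] by metis
  then have "Re (of_real (f u) - \<i> * of_real (f (sc \<i> u))) \<noteq> 0"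
    using assms by simp
  then show ?thesis
    by (intro that[OF clinear_functional_complexification[OF f]]) auto
qed

lemma annihilated_vector_exists:
  fixes u :: "nat \<Rightarrow> 'a" and g :: "nat \<Rightarrow> 'a \<Rightarrow> complex"
  assumes M: "C.subspace M" "\<And>F. finite F \<Longrightarrow> \<not> M \<subseteq> C.span F"
    and u: "\<And>i. i < n \<Longrightarrow> u i \<in> M" and g: "\<And>i. i < n \<Longrightarrow> clinear_functional (g i)"
    and biorth: "\<And>i j. i < n \<Longrightarrow> j < n \<Longrightarrow> g i (u j) = (if i = j then 1 else 0)"
  obtains v where "v \<in> M" "v \<noteq> 0" "\<And>j. j < n \<Longrightarrow> g j v = 0"
proof -
  obtain w where "w \<in> M" and w: "w \<notin> C.span (u ` {..<n})"
    using M(2)[of "u ` {..<n}"] by auto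
  define v where "v = w - (\<Sum>i<n. sc (g i w) (u i))"
  have "v \<in> M"
    unfolding v_def using M(1) u \<open>w \<in> M\<close>
    by (intro C.subspace_diff C.subspace_sum C.subspace_scale) auto
  moreover have "v \<noteq> 0"
  proof
    assume "v = 0"
    then have "w = (\<Sum>i<n. sc (g i w) (u i))"
      unfolding v_def by simp
    also have "\<dots> \<in> C.span (u ` {..<n})"
      by (intro C.span_sum C.span_scale C.span_base) auto
    finally show False using w by simp
  qed
  moreover have "g j v = 0" if "j < n" for j
  proof -
    interpret gj: bounded_linear "g j"
      using g[OF that] by (rule clinear_functional_bounded_linear)
    have "g j v = g j w - (\<Sum>i<n. g i w * g j (u i))"
      unfolding v_def by (simp add: gj.diff gj.sum clinear_functional_sc[OF g[OF that]])
    also have "(\<Sum>i<n. g i w * g j (u i)) = (\<Sum>i<n. if i = j then g j w else 0)"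
      using that by (intro sum.cong) (auto simp: biorth)
    finally show ?thesis using that by simp
  qed
  ultimately show ?thesis using that by blast
qed

lemma dual_functional_exists:
  fixes u :: "nat \<Rightarrow> 'a" and g :: "nat \<Rightarrow> 'a \<Rightarrow> complex"
  assumes "v \<noteq> 0" and g: "\<And>i. i < n \<Longrightarrow> clinear_functional (g i)"
    and biorth: "\<And>i j. i < n \<Longrightarrow> j < n \<Longrightarrow> g i (u j) = (if i = j then 1 else 0)"
    and gv: "\<And>j. j < n \<Longrightarrow> g j v = 0"
  obtains h where "clinear_functional h" "h v = 1" "\<And>j. j < n \<Longrightarrow> h (u j) = 0"
proof -
  obtain h0 where h0: "clinear_functional h0" "h0 v \<noteq> 0"
    using complex_hahn_banach_nonvanishing[OF \<open>v \<noteq> 0\<close>] by blast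
  define h where "h x = (h0 x - (\<Sum>i<n. h0 (u i) * g i x)) / h0 v" for x
  have "bounded_linear h"
    unfolding h_def using h0(1) g
    by (intro bounded_linear_compose[OF bounded_linear_divide] bounded_linear_sub
        bounded_linear_sum bounded_linear_compose[OF bounded_linear_mult_right]
        clinear_functional_bounded_linear) auto
  moreover have "h (sc c x) = c * h x" for c x
    using g by (simp add: h_def clinear_functional_sc[OF h0(1)] clinear_functional_sc
        sum_distrib_left algebra_simps)
  ultimately have "clinear_functional h"
    unfolding clinear_functional_def by blast
  moreover have "h v = 1"
    using gv h0(2) by (simp add: h_def)
  moreover have "h (u j) = 0" if "j < n" for j
  proof -
    have "(\<Sum>i<n. h0 (u i) * g i (u j)) = (\<Sum>i<n. if i = j then h0 (u j) else 0)"
      using that by (intro sum.cong) (auto simp: biorth)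
    then show ?thesis using that by (simp add: h_def)
  qed
  ultimately show ?thesis using that by blast
qed

lemma biorthogonal_sequence_exists:
  assumes M: "C.subspace M" "\<And>F. finite F \<Longrightarrow> \<not> M \<subseteq> C.span F"
  obtains u :: "nat \<Rightarrow> 'a" and g :: "nat \<Rightarrow> 'a \<Rightarrow> complex"
  where "\<And>i. u i \<in> M" "\<And>i. clinear_functional (g i)"
    "\<And>i j. g i (u j) = (if i = j then 1 else 0)"
proof -
  \<comment> \<open>\<open>p\<close> can be appended to the biorthogonal family \<open>f 0, \<dots>, f (n - 1)\<close>\<close>
  define P where "P f n p \<longleftrightarrow> fst p \<in> M \<and> clinear_functional (snd p) \<and> snd p (fst p) = 1
      \<and> (\<forall>j<n. snd p (fst (f j)) = 0 \<and> snd (f j) (fst p) = 0)"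
    for f :: "nat \<Rightarrow> 'a \<times> ('a \<Rightarrow> complex)" and n p
  have biorth: "snd (f i) (fst (f j)) = (if i = j then 1 else 0)"
    if "\<And>m. m < N \<Longrightarrow> P f m (f m)" "i < N" "j < N" for f N i j
    using that(1)[OF that(2)] that(1)[OF that(3)] by (cases i j rule: linorder_cases) (auto simp: P_def)
  have "\<exists>f. \<forall>n. P f n (f n)"
  proof (rule dependent_wellorder_choice)
    fix p and f f' :: "nat \<Rightarrow> 'a \<times> ('a \<Rightarrow> complex)" and n :: nat
    assume "\<And>m. m < n \<Longrightarrow> f m = f' m"
    then show "P f n p = P f' n p" unfolding P_def by simp
  next
    fix f and n :: nat
    assume prev: "\<And>m. m < n \<Longrightarrow> P f m (f m)"
    obtain v where v: "v \<in> M" "v \<noteq> 0" "\<And>j. j < n \<Longrightarrow> snd (f j) v = 0"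
      using annihilated_vector_exists[OF M, of n "\<lambda>i. fst (f i)" "\<lambda>i. snd (f i)"]
        prev biorth[OF prev] unfolding P_def by blast
    obtain h where "clinear_functional h" "h v = 1" "\<And>j. j < n \<Longrightarrow> h (fst (f j)) = 0"
      using dual_functional_exists[OF v(2), of n "\<lambda>i. snd (f i)" "\<lambda>i. fst (f i)"]
        prev biorth[OF prev] v(3) unfolding P_def by blast
    then show "\<exists>p. P f n p"
      using v unfolding P_def by (intro exI[of _ "(v, h)"]) auto
  qed
  then obtain f where f: "\<And>n. P f n (f n)" by blast
  show ?thesis
  proof (rule that[of "\<lambda>i. fst (f i)" "\<lambda>i. snd (f i)"])
    show "fst (f i) \<in> M" "clinear_functional (snd (f i))" for i
      using f[of i] unfolding P_def by blast+
    show "snd (f i) (fst (f j)) = (if i = j then 1 else 0)" for i j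
      using biorth[OF f, of i "Suc (max i j)" j] by simp
  qed
qed

end

section \<open>Kronecker substitution\<close>

lemma digits_unique:
  fixes B :: nat
  assumes "\<And>i. i < n \<Longrightarrow> f i < B" "\<And>i. i < n \<Longrightarrow> g i < B"
    and "(\<Sum>i<n. f i * B ^ i) = (\<Sum>i<n. g i * B ^ i)" and "i < n"
  shows "f i = g i"
  using assms
proof (induction n arbitrary: f g i)
  case (Suc n)
  have shift: "(\<Sum>i<Suc n. h i * B ^ i) = h 0 + B * (\<Sum>i<n. h (Suc i) * B ^ i)" for h :: "nat \<Rightarrow> nat"
    unfolding sum.lessThan_Suc_shift by (simp add: sum_distrib_left algebra_simps)
  have "f 0 < B" "g 0 < B"
    using Suc.prems by auto
  then have "f 0 = g 0" and tail: "(\<Sum>i<n. f (Suc i) * B ^ i) = (\<Sum>i<n. g (Suc i) * B ^ i)"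
    using arg_cong[OF Suc.prems(3), of "\<lambda>s. s mod B"] arg_cong[OF Suc.prems(3), of "\<lambda>s. s div B"]
    unfolding shift by simp_all
  show ?case
  proof (cases i)
    case (Suc j)
    then show ?thesis
      using Suc.IH[of "\<lambda>i. f (Suc i)" "\<lambda>i. g (Suc i)" j] Suc.prems tail by simp
  qed (use \<open>f 0 = g 0\<close> in simp)
qed simp

lemma kronecker_exponent_inj:
  fixes \<alpha> \<beta> :: "nat \<Rightarrow> nat"
  assumes \<alpha>: "\<And>i. \<alpha> i \<noteq> 0 \<Longrightarrow> i < D \<and> \<alpha> i \<le> D"
    and \<beta>: "\<And>i. \<beta> i \<noteq> 0 \<Longrightarrow> i < D \<and> \<beta> i \<le> D"
    and eq: "(\<Sum>i | \<alpha> i \<noteq> 0. \<alpha> i * (D + 1) ^ i) = (\<Sum>i | \<beta> i \<noteq> 0. \<beta> i * (D + 1) ^ i)"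
  shows "\<alpha> = \<beta>"
proof
  have expand: "(\<Sum>i | \<gamma> i \<noteq> 0. \<gamma> i * (D + 1) ^ i) = (\<Sum>i<D. \<gamma> i * (D + 1) ^ i)"
    if "\<And>i. \<gamma> i \<noteq> 0 \<Longrightarrow> i < D \<and> \<gamma> i \<le> D" for \<gamma> :: "nat \<Rightarrow> nat"
    using that by (intro sum.mono_neutral_left) auto
  have digit: "\<gamma> i < D + 1" if "\<And>i. \<gamma> i \<noteq> 0 \<Longrightarrow> i < D \<and> \<gamma> i \<le> D" for \<gamma> :: "nat \<Rightarrow> nat" and i
    using that[of i] by (cases "\<gamma> i = 0") auto
  have digits_eq: "(\<Sum>i<D. \<alpha> i * (D + 1) ^ i) = (\<Sum>i<D. \<beta> i * (D + 1) ^ i)"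
    using eq expand[OF \<alpha>] expand[OF \<beta>] by metis
  fix i
  show "\<alpha> i = \<beta> i"
  proof (cases "i < D")
    case True
    show ?thesis
      by (rule digits_unique[where B = "D + 1"]) (use digit[OF \<alpha>] digit[OF \<beta>] digits_eq True in auto)
  next
    case False
    then show ?thesis using \<alpha>[of i] \<beta>[of i] by fastforce
  qed
qed

lemma finitely_supported_bound:
  fixes S :: "(nat \<Rightarrow> nat) set"
  assumes "finite S" "\<And>\<alpha>. \<alpha> \<in> S \<Longrightarrow> finite {i. \<alpha> i \<noteq> 0}"
  obtains D where "\<And>\<alpha> i. \<alpha> \<in> S \<Longrightarrow> \<alpha> i \<noteq> 0 \<Longrightarrow> i < D \<and> \<alpha> i \<le> D"
proof -
  have "finite (\<Union>\<alpha>\<in>S. {i. \<alpha> i \<noteq> 0} \<union> \<alpha> ` {i. \<alpha> i \<noteq> 0})"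
    using assms by blast
  then obtain D where D: "(\<Union>\<alpha>\<in>S. {i. \<alpha> i \<noteq> 0} \<union> \<alpha> ` {i. \<alpha> i \<noteq> 0}) \<subseteq> {..<D}"
    using finite_nat_bounded by blast
  have "i < D \<and> \<alpha> i \<le> D" if "\<alpha> \<in> S" "\<alpha> i \<noteq> 0" for \<alpha> i
  proof -
    have "i \<in> {..<D}" "\<alpha> i \<in> {..<D}"
      using that D by blast+
    then show ?thesis by simp
  qed
  then show ?thesis using that by blast
qed

section \<open>A commutative Banach algebra product\<close>

lemma injective_weights_exist:
  fixes b :: "nat \<Rightarrow> real"
  obtains w where "inj w" "\<And>n. 0 < w n" "\<And>n. w n * b n \<le> (1/2) ^ Suc n"
proof -
  define W where "W n = (\<Prod>k\<le>n. max 1 (b k))" for n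
  define w where "w n = (1/2) ^ Suc n / W n" for n
  have W_ge_1: "1 \<le> W n" for n
    unfolding W_def by (intro prod_ge_1) auto
  have W_Suc: "W (Suc n) = W n * max 1 (b (Suc n))" for n
    by (simp add: W_def)
  have b_le_W: "b n \<le> W n" for n
  proof (cases n)
    case (Suc m)
    then show ?thesis
      using W_ge_1[of m] W_Suc[of m] mult_right_mono[of 1 "W m" "max 1 (b n)"] by simp
  qed (simp add: W_def)
  have w_pos: "0 < w n" for n
    unfolding w_def using W_ge_1[of n] by simp
  have "w n * b n \<le> w n * W n" for n
    using w_pos[of n] b_le_W[of n] by simp
  also have "w n * W n = (1/2) ^ Suc n" for n
    unfolding w_def using W_ge_1[of n] by simp
  finally have w_bound: "w n * b n \<le> (1/2) ^ Suc n" for n .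
  have "w (Suc n) < w n" for n
  proof -
    have "w (Suc n) = w n / (2 * max 1 (b (Suc n)))"
      unfolding w_def W_Suc by (simp add: field_simps)
    also have "\<dots> < w n"
      using w_pos[of n] by (simp add: divide_less_eq)
    finally show ?thesis .
  qed
  then have "strict_mono (\<lambda>n. - w n)"
    by (simp add: strict_mono_Suc_iff)
  then have "inj w"
    by (metis injI neg_equal_iff_equal strict_mono_eq)
  then show ?thesis
    using that w_pos w_bound by blast
qed

locale weighted_biorthogonal_system = complex_banach_space sc
  for sc :: "complex \<Rightarrow> 'a::banach \<Rightarrow> 'a" +
  fixes M :: "'a set" and u :: "nat \<Rightarrow> 'a" and g :: "nat \<Rightarrow> 'a \<Rightarrow> complex"
    and w :: "nat \<Rightarrow> real"
  assumes subspace_M: "C.subspace M" and closed_M: "closed M"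
    and u_in_M: "u i \<in> M" and clinear_g: "clinear_functional (g i)"
    and g_u: "g i (u j) = (if i = j then 1 else 0)"
    and inj_w: "inj w" and w_pos: "0 < w n"
    and w_small: "w n * (((onorm (g n))\<^sup>2 + 1) * (norm (u n) + 1)) \<le> (1/2) ^ Suc n"
begin

lemma bounded_linear_g: "bounded_linear (g n)"
  using clinear_g by (rule clinear_functional_bounded_linear)

lemma norm_g_le: "norm (g n x) \<le> onorm (g n) * norm x"
  using bounded_linear_g by (rule onorm)

lemma w_mult_le:
  assumes "0 \<le> a" "a \<le> ((onorm (g n))\<^sup>2 + 1) * (norm (u n) + 1)"
  shows "w n * a \<le> (1/2) ^ Suc n"
  using mult_left_mono[OF assms(2) less_imp_le[OF w_pos[of n]]] w_small[of n] by linarith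

lemma w_le: "w n \<le> (1/2) ^ Suc n"
  using w_mult_le[of 1 n] by (simp add: algebra_simps)

lemma w_norm_u_le: "w n * norm (u n) \<le> (1/2) ^ Suc n"
  by (rule w_mult_le) (simp_all add: algebra_simps)

lemma w_onorm_norm_u_le: "w n * ((onorm (g n))\<^sup>2 * norm (u n)) \<le> (1/2) ^ Suc n"
  by (rule w_mult_le) (simp_all add: algebra_simps)

definition expansion :: "(nat \<Rightarrow> complex) \<Rightarrow> 'a" where
  "expansion a = (\<Sum>n. sc (a n) (u n))"

lemma summable_norm_expansion:
  assumes "\<And>n. norm (sc (a n) (u n)) \<le> C * (1/2) ^ Suc n"
  shows "summable (\<lambda>n. norm (sc (a n) (u n)))"
  by (rule summable_comparison_test'[where N = 0, OF summable_mult[OF sums_summable[OF power_half_series], of C]])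
    (use assms in auto)

lemma g_expansion:
  assumes "summable (\<lambda>n. norm (sc (a n) (u n)))"
  shows "g k (expansion a) = a k"
proof -
  have "g k (expansion a) = (\<Sum>n. g k (sc (a n) (u n)))"
    unfolding expansion_def using summable_norm_cancel[OF assms] by (rule bounded_linear.suminf[OF bounded_linear_g])
  also have "\<dots> = (\<Sum>n. if n = k then a n else 0)"
    by (intro arg_cong[where f = suminf] ext) (simp add: clinear_functional_sc[OF clinear_g] g_u)
  also have "\<dots> = a k"
    using sums_single[of k a] by (simp add: sums_iff)
  finally show ?thesis .
qed

lemma expansion_in_M:
  assumes "summable (\<lambda>n. norm (sc (a n) (u n)))"
  shows "expansion a \<in> M"
proof -
  have "(\<Sum>n<N. sc (a n) (u n)) \<in> M" for N
    using subspace_M u_in_M by (intro C.subspace_sum C.subspace_scale) auto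
  moreover have "(\<lambda>N. \<Sum>n<N. sc (a n) (u n)) \<longlonglongrightarrow> expansion a"
    unfolding expansion_def by (rule summable_LIMSEQ[OF summable_norm_cancel[OF assms]])
  ultimately show ?thesis
    by (rule closed_sequentially[OF closed_M])
qed

lemma expansion_add:
  assumes "summable (\<lambda>n. norm (sc (a n) (u n)))" "summable (\<lambda>n. norm (sc (b n) (u n)))"
  shows "expansion (\<lambda>n. a n + b n) = expansion a + expansion b"
  unfolding expansion_def
  using suminf_add[OF summable_norm_cancel[OF assms(1)] summable_norm_cancel[OF assms(2)]]
  by (simp add: C.scale_left_distrib)

lemma expansion_sc:
  assumes "summable (\<lambda>n. norm (sc (a n) (u n)))"
  shows "expansion (\<lambda>n. c * a n) = sc c (expansion a)"
  unfolding expansion_def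
  using bounded_linear.suminf[OF bounded_linear_sc summable_norm_cancel[OF assms], of c]
  by (simp add: C.scale_scale)

definition mult :: "'a \<Rightarrow> 'a \<Rightarrow> 'a" where
  "mult x y = expansion (\<lambda>n. of_real (w n) * g n x * g n y)"

lemma norm_mult_term_le:
  "norm (sc (of_real (w n) * g n x * g n y) (u n)) \<le> (norm x * norm y) * (1/2) ^ Suc n"
proof -
  have "norm (sc (of_real (w n) * g n x * g n y) (u n)) = w n * norm (g n x) * norm (g n y) * norm (u n)"
    using w_pos[of n] by (simp add: norm_sc norm_mult)
  also have "\<dots> \<le> w n * (onorm (g n) * norm x) * (onorm (g n) * norm y) * norm (u n)"
    using w_pos[of n] norm_g_le
    by (intro mult_right_mono mult_mono mult_left_mono) (auto simp: onorm_pos_le[OF bounded_linear_g])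
  also have "\<dots> = (norm x * norm y) * (w n * ((onorm (g n))\<^sup>2 * norm (u n)))"
    by (simp add: power2_eq_square algebra_simps)
  also have "\<dots> \<le> (norm x * norm y) * (1/2) ^ Suc n"
    by (intro mult_left_mono w_onorm_norm_u_le) simp
  finally show ?thesis .
qed

lemma summable_norm_mult_terms: "summable (\<lambda>n. norm (sc (of_real (w n) * g n x * g n y) (u n)))"
  by (rule summable_norm_expansion[OF norm_mult_term_le])

lemma g_mult: "g k (mult x y) = of_real (w k) * g k x * g k y"
  unfolding mult_def by (rule g_expansion[OF summable_norm_mult_terms])

lemma mult_in_M: "mult x y \<in> M"
  unfolding mult_def by (rule expansion_in_M[OF summable_norm_mult_terms])

lemma norm_mult_le: "norm (mult x y) \<le> norm x * norm y"
proof -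
  have "norm (mult x y) \<le> (\<Sum>n. norm (sc (of_real (w n) * g n x * g n y) (u n)))"
    unfolding mult_def expansion_def by (rule summable_norm[OF summable_norm_mult_terms])
  also have "\<dots> \<le> (\<Sum>n. (norm x * norm y) * (1/2) ^ Suc n)"
    by (intro suminf_le norm_mult_term_le summable_norm_mult_terms
        summable_mult[OF sums_summable[OF power_half_series]])
  also have "\<dots> = norm x * norm y"
    using sums_mult[OF power_half_series, of "norm x * norm y"] by (simp add: sums_iff)
  finally show ?thesis .
qed

lemma mult_commute: "mult x y = mult y x"
  unfolding mult_def by (simp add: algebra_simps)

lemma mult_add_left: "mult (x + y) z = mult x z + mult y z"
proof -
  interpret g: bounded_linear "g n" for n by (rule bounded_linear_g)
  show ?thesis
    unfolding mult_def
    by (subst expansion_add[OF summable_norm_mult_terms summable_norm_mult_terms, symmetric])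
      (simp add: g.add algebra_simps)
qed

lemma mult_sc_left: "mult (sc c x) y = sc c (mult x y)"
  unfolding mult_def
  by (subst expansion_sc[OF summable_norm_mult_terms, symmetric])
    (simp add: clinear_functional_sc[OF clinear_g] algebra_simps)

lemma mult_assoc: "mult (mult x y) z = mult x (mult y z)"
  unfolding mult_def[of "mult x y"] mult_def[of x "mult y z"] by (simp add: g_mult algebra_simps)

lemma comm_banach_algebra_product_mult: "comm_banach_algebra_product sc mult"
  unfolding comm_banach_algebra_product_def
  using mult_add_left mult_sc_left mult_assoc mult_commute norm_mult_le by metis

section \<open>Algebraically independent generators\<close>

definition character :: "nat \<Rightarrow> 'a \<Rightarrow> complex" where
  "character k x = of_real (w k) * g k x"

lemma character_mult: "character k (mult x y) = character k x * character k y"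
  unfolding character_def g_mult by (simp add: algebra_simps)

lemma character_linear_combination:
  "character k (\<Sum>\<alpha>\<in>S. sc (c \<alpha>) (x \<alpha>)) = (\<Sum>\<alpha>\<in>S. c \<alpha> * character k (x \<alpha>))"
proof -
  interpret g: bounded_linear "g k" by (rule bounded_linear_g)
  show ?thesis
    unfolding character_def by (simp add: g.sum clinear_functional_sc[OF clinear_g] sum_distrib_left
        algebra_simps)
qed

lemma character_zero: "character k 0 = 0"
proof -
  interpret g: bounded_linear "g k" by (rule bounded_linear_g)
  show ?thesis unfolding character_def by simp
qed

lemma character_apow: "character k (apow mult x n) = character k x ^ Suc n"
  by (induction n) (simp_all add: character_mult)

lemma character_mprod: "xs \<noteq> [] \<Longrightarrow> character k (mprod mult xs) = prod_list (map (character k) xs)"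
  by (induction mult xs rule: mprod.induct) (simp_all add: character_mult)

definition node :: "nat \<Rightarrow> real" where
  "node k = (w k)\<^sup>2"

definition block :: "nat \<Rightarrow> nat" where
  "block k = fst (prod_decode k)"

text \<open>The \<open>k\<close>-th character sends \<open>generator i\<close> to \<open>node k ^ (block k + 1) ^ i\<close>, hence a monomial
  with exponents at most \<open>block k\<close> to \<open>node k\<close> raised to the number having these exponents as
  digits in base \<open>block k + 1\<close>. Every value of \<open>block\<close> is taken infinitely often.\<close>
definition generator :: "nat \<Rightarrow> 'a" where
  "generator i = expansion (\<lambda>k. of_real (node k ^ (block k + 1) ^ i / w k))"

lemma inj_node: "inj node"
  using inj_w w_pos unfolding node_def inj_def by (metis less_imp_le power2_eq_iff_nonneg)

lemma node_le_1: "node k \<le> 1"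
proof -
  have "(1/2::real) ^ Suc k \<le> 1"
    by (intro power_le_one) auto
  then have "w k \<le> 1"
    using w_le[of k] by linarith
  then show ?thesis
    unfolding node_def using w_pos[of k] by (simp add: power_le_one)
qed

lemma summable_norm_generator_terms:
  "summable (\<lambda>k. norm (sc (of_real (node k ^ (block k + 1) ^ i / w k)) (u k)))"
proof (rule summable_norm_expansion[where C = 1])
  fix k
  define r where "r = node k ^ (block k + 1) ^ i / w k"
  have "node k ^ (block k + 1) ^ i \<le> node k"
    using node_le_1[of k] power_decreasing[of 1 "(block k + 1) ^ i" "node k"]
    by (simp add: node_def)
  then have "r \<le> node k / w k"
    unfolding r_def using w_pos[of k] by (simp add: divide_right_mono)
  also have "node k / w k = w k"
    using w_pos[of k] by (simp add: node_def power2_eq_square)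
  finally have "r \<le> w k" .
  moreover have "0 \<le> r"
    unfolding r_def node_def using w_pos[of k] by simp
  ultimately have "norm (sc (of_real r) (u k)) \<le> w k * norm (u k)"
    by (simp add: norm_sc mult_right_mono)
  also have "\<dots> \<le> 1 * (1/2) ^ Suc k"
    using w_norm_u_le[of k] by simp
  finally show "norm (sc (of_real (node k ^ (block k + 1) ^ i / w k)) (u k)) \<le> 1 * (1/2) ^ Suc k"
    unfolding r_def .
qed

lemma character_generator: "character k (generator i) = of_real (node k) ^ (block k + 1) ^ i"
  unfolding character_def generator_def g_expansion[OF summable_norm_generator_terms]
  using w_pos[of k] by simp

lemma character_monomial:
  assumes "finite {i. \<alpha> i \<noteq> 0}" "\<alpha> \<noteq> (\<lambda>_. 0)"
  shows "character k (monomial_eval mult generator \<alpha>)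
    = of_real (node k) ^ (\<Sum>i | \<alpha> i \<noteq> 0. \<alpha> i * (block k + 1) ^ i)"
proof -
  define L where "L = sorted_list_of_set {i. \<alpha> i \<noteq> 0}"
  have L: "set L = {i. \<alpha> i \<noteq> 0}" "distinct L"
    using assms(1) unfolding L_def by auto
  moreover have "L \<noteq> []"
    using L(1) assms(2) by auto
  ultimately have "character k (monomial_eval mult generator \<alpha>)
      = prod_list (map (\<lambda>i. character k (apow mult (generator i) (\<alpha> i - 1))) L)"
    unfolding monomial_eval_def L_def[symmetric] by (simp add: character_mprod comp_def)
  also have "\<dots> = prod_list (map (\<lambda>i. of_real (node k) ^ (\<alpha> i * (block k + 1) ^ i)) L)"
    using L(1) by (intro arg_cong[where f = prod_list] map_cong)
      (auto simp: character_apow character_generator power_mult[symmetric] mult.commute)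
  also have "\<dots> = (\<Prod>i | \<alpha> i \<noteq> 0. of_real (node k) ^ (\<alpha> i * (block k + 1) ^ i))"
    unfolding L(1)[symmetric] by (rule prod.distinct_set_conv_list[OF L(2), symmetric])
  also have "\<dots> = of_real (node k) ^ (\<Sum>i | \<alpha> i \<noteq> 0. \<alpha> i * (block k + 1) ^ i)"
    by (rule power_sum[symmetric])
  finally show ?thesis .
qed

lemma character_polynomial:
  assumes "\<And>\<alpha>. \<alpha> \<in> S \<Longrightarrow> \<alpha> \<noteq> (\<lambda>_. 0) \<and> finite {i. \<alpha> i \<noteq> 0}"
  shows "character k (\<Sum>\<alpha>\<in>S. sc (c \<alpha>) (monomial_eval mult generator \<alpha>))
    = poly (\<Sum>\<alpha>\<in>S. monom (c \<alpha>) (\<Sum>i | \<alpha> i \<noteq> 0. \<alpha> i * (block k + 1) ^ i)) (of_real (node k))"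
  using assms by (simp add: character_linear_combination character_monomial poly_sum poly_monom)

lemma generators_alg_independent: "alg_independent sc mult generator"
  unfolding alg_independent_def
proof (intro allI impI ballI)
  fix S :: "(nat \<Rightarrow> nat) set" and c :: "(nat \<Rightarrow> nat) \<Rightarrow> complex" and \<alpha>0
  assume fin: "finite S" and S: "\<forall>\<alpha>\<in>S. \<alpha> \<noteq> (\<lambda>_. 0) \<and> finite {i. \<alpha> i \<noteq> 0}"
    and vanish: "(\<Sum>\<alpha>\<in>S. sc (c \<alpha>) (monomial_eval mult generator \<alpha>)) = 0" and "\<alpha>0 \<in> S"
  obtain D where D: "\<And>\<alpha> i. \<alpha> \<in> S \<Longrightarrow> \<alpha> i \<noteq> 0 \<Longrightarrow> i < D \<and> \<alpha> i \<le> D"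
    using finitely_supported_bound[OF fin] S by blast
  define E where "E \<alpha> = (\<Sum>i | \<alpha> i \<noteq> 0. \<alpha> i * (D + 1) ^ i)" for \<alpha> :: "nat \<Rightarrow> nat"
  define Q where "Q = (\<Sum>\<alpha>\<in>S. monom (c \<alpha>) (E \<alpha>))"
  have "poly Q (of_real (node (prod_encode (D, j)))) = 0" for j
  proof -
    have "block (prod_encode (D, j)) = D"
      by (simp add: block_def)
    then show ?thesis
      using character_polynomial[of S "prod_encode (D, j)" c] S vanish
      by (simp add: Q_def E_def character_zero)
  qed
  then have "range (\<lambda>j. of_real (node (prod_encode (D, j)))) \<subseteq> {z. poly Q z = 0}"
    by auto
  moreover have "infinite (range (\<lambda>j. complex_of_real (node (prod_encode (D, j)))))"
    by (intro range_inj_infinite injI) (auto dest: injD[OF inj_node] simp: prod_encode_eq)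
  ultimately have "Q = 0"
    using poly_roots_finite finite_subset by blast
  have "inj_on E S"
    by (intro inj_onI kronecker_exponent_inj) (auto simp: E_def D)
  then have "coeff Q (E \<alpha>0) = c \<alpha>0"
    using fin \<open>\<alpha>0 \<in> S\<close> by (simp add: Q_def coeff_sum inj_on_eq_iff if_distrib sum.delta' cong: if_cong)
  then show "c \<alpha>0 = 0"
    using \<open>Q = 0\<close> by simp
qed

lemma gen_algebra_subset_M: "gen_algebra sc mult generator \<subseteq> M"
proof
  fix y assume "y \<in> gen_algebra sc mult generator"
  then show "y \<in> M"
  proof (induction rule: gen_algebra.induct)
    case (gen i)
    show ?case
      unfolding generator_def by (rule expansion_in_M[OF summable_norm_generator_terms])
  next
    case (add a b)
    show ?case using add.IH by (rule C.subspace_add[OF subspace_M])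
  next
    case (smult a c)
    show ?case using smult.IH by (rule C.subspace_scale[OF subspace_M])
  next
    case (mult a b)
    show ?case by (rule mult_in_M)
  qed
qed

end

theorem theorem4p3:
  fixes sc :: "complex \<Rightarrow> 'a::banach \<Rightarrow> 'a" and T :: "'a \<Rightarrow> 'a"
  assumes "complex_banach sc"
    and "bounded_clinear_op sc T"
    and "FHC T \<noteq> {}"
    and "\<exists>M. fhc_subspace sc T M"
  shows "\<exists>m. comm_banach_algebra_product sc m \<and> strongly_algebrable sc m (FHC T)"
proof -
  interpret complex_banach_space sc
    by unfold_locales (rule assms(1))
  obtain M where subspace: "C.subspace M" and "closed M"
    and infinite_dim: "\<And>F. finite F \<Longrightarrow> \<not> M \<subseteq> C.span F"
    and frequently_hypercyclic: "\<And>x. x \<in> M \<Longrightarrow> x \<noteq> 0 \<Longrightarrow> x \<in> FHC T"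
    using assms(4) unfolding fhc_subspace_def by blast
  obtain u :: "nat \<Rightarrow> 'a" and g :: "nat \<Rightarrow> 'a \<Rightarrow> complex"
    where "\<And>i. u i \<in> M" "\<And>i. clinear_functional (g i)"
      "\<And>i j. g i (u j) = (if i = j then 1 else 0)"
    using biorthogonal_sequence_exists[OF subspace infinite_dim] by metis
  moreover obtain w where "inj w" "\<And>n. 0 < w n"
    "\<And>n. w n * (((onorm (g n))\<^sup>2 + 1) * (norm (u n) + 1)) \<le> (1/2) ^ Suc n"
    using injective_weights_exist[of "\<lambda>n. ((onorm (g n))\<^sup>2 + 1) * (norm (u n) + 1)"] by metis
  ultimately interpret weighted_biorthogonal_system sc M u g w
    using subspace \<open>closed M\<close> by unfold_locales auto
  have "strongly_algebrable sc mult (FHC T)"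
    unfolding strongly_algebrable_def
    using generators_alg_independent gen_algebra_subset_M frequently_hypercyclic by blast
  then show ?thesis
    using comm_banach_algebra_product_mult by blast
qed

end
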